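(* For $\vec x,\vec y,\vec z,\vec u,\vec v,\vec w\in\Lambda_G$ the following hold in $\kappa G^\#$: (i) $([\vec y,\vec z]\cdot\vec w)(\vec x\cdot\vec u)-([\vec x,\vec z]\cdot\vec w)(\vec y\cdot\vec u)+([\vec x,\vec y]\cdot\vec w)(\vec z\cdot\vec u)-([\vec x,\vec y]\cdot\vec z)(\vec w\cdot\vec u)=0$; (ii) $([\vec x,\vec y]\cdot\vec z)([\vec u,\vec v]\cdot\vec w)=\det\begin{pmatrix}\vec x\cdot\vec u&\vec x\cdot\vec v&\vec x\cdot\vec w\\ \vec y\cdot\vec u&\vec y\cdot\vec v&\vec y\cdot\vec w\\ \vec z\cdot\vec u&\vec z\cdot\vec v&\vec z\cdot\vec w\end{pmatrix}$.
   Context: Let $\kappa$ be a field of characteristic $0$ and $G$ a group. Let $*:\kappa G\to\kappa G$ be the $\kappa$-linear map with $g^*=g^{-1}$, $(\kappa G)^*$ its fixed points, and $A_G$ the quotient of $\kappa G$ by the two-sided ideal generated by all $ab-ba$, $a\in\kappa G$, $b\in(\kappa G)^*$; $*$ descends to $A_G$. Let $\kappa G^\#=\{x\in A_G:x^*=x\}$ (a commutative subring of the centre of $A_G$) and $\Lambda_G=\{x\in A_G:x^*=-x\}$. For $\vec x,\vec y\in\Lambda_G$ define $\vec x\cdot\vec y=-\tfrac12(\vec x\vec y+\vec y\vec x)\in\kappa G^\#$ and $[\vec x,\vec y]=\tfrac12(\vec x\vec y-\vec y\vec x)\in\Lambda_G$. *)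

theory Defs
  imports "HOL-Library.Poly_Mapping"
begin

text \<open>Group algebra \<kappa>G: the group G is a type of class group_add (group operation
 written additively, so g^{-1} is -g and the unit is 0; commutativity is NOT assumed);
 \<kappa>G is the ring of finitely supported functions G \<Rightarrow> \<kappa>, whose
 multiplication is convolution (the group-algebra product).\<close>

type_synonym ('g, 'k) group_alg = "'g \<Rightarrow>\<^sub>0 'k"

lift_definition gstar :: "('g::group_add, 'k::zero) group_alg \<Rightarrow> ('g, 'k) group_alg"
  is "\<lambda>f g. f (- g)"
proof -
  fix f :: "'g \<Rightarrow> 'k" assume "finite {x. f x \<noteq> 0}"
  hence "finite (uminus ` {x. f x \<noteq> 0})" by simp
  moreover have "{x. f (- x) \<noteq> 0} = uminus ` {x. f x \<noteq> 0}"
    by (auto intro: image_eqI[of _ uminus "- _"])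
  ultimately show "finite {x. f (- x) \<noteq> 0}" by simp
qed

inductive_set sym_comm_ideal :: "('g::group_add, 'k::field) group_alg set" where
  gen: "gstar b = b \<Longrightarrow> a * b - b * a \<in> sym_comm_ideal"
| zero: "0 \<in> sym_comm_ideal"
| add: "x \<in> sym_comm_ideal \<Longrightarrow> y \<in> sym_comm_ideal \<Longrightarrow> x + y \<in> sym_comm_ideal"
| lmult: "y \<in> sym_comm_ideal \<Longrightarrow> r * y \<in> sym_comm_ideal"
| rmult: "y \<in> sym_comm_ideal \<Longrightarrow> y * r \<in> sym_comm_ideal"

text \<open>A_G = \<kappa>G / sym_comm_ideal; we work with representatives:
 congruence modulo the ideal is equality in A_G.\<close>
definition AG_eq :: "('g::group_add, 'k::field) group_alg \<Rightarrow> ('g, 'k) group_alg \<Rightarrow> bool" where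
  "AG_eq a b \<longleftrightarrow> a - b \<in> sym_comm_ideal"

definition in_Lambda :: "('g::group_add, 'k::field) group_alg \<Rightarrow> bool" where
  "in_Lambda x \<longleftrightarrow> AG_eq (gstar x) (- x)"

definition half :: "('g::group_add, 'k::field) group_alg" where
  "half = Poly_Mapping.single 0 (1 / 2)"

definition gdot :: "('g::group_add, 'k::field) group_alg \<Rightarrow> ('g, 'k) group_alg \<Rightarrow> ('g, 'k) group_alg" where
  "gdot x y = - (half * (x * y + y * x))"

definition gbr :: "('g::group_add, 'k::field) group_alg \<Rightarrow> ('g, 'k) group_alg \<Rightarrow> ('g, 'k) group_alg" where
  "gbr x y = half * (x * y - y * x)"

definition det3 :: "'a::ring \<Rightarrow> 'a \<Rightarrow> 'a \<Rightarrow> 'a \<Rightarrow> 'a \<Rightarrow> 'a \<Rightarrow> 'a \<Rightarrow> 'a \<Rightarrow> 'a \<Rightarrow> 'a" where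
  "det3 a11 a12 a13 a21 a22 a23 a31 a32 a33 =
     a11 * a22 * a33 + a12 * a23 * a31 + a13 * a21 * a32
   - a13 * a22 * a31 - a12 * a21 * a33 - a11 * a23 * a32"

end

theory Submission
  imports Defs
begin

(* Write A = A_G and let * be the induced involution on it.  Only three
   properties of A are used: * is an additive anti-automorphism of order two, every
   *-symmetric element is central, and 2 is invertible (via h = 1/2).  For skew elements
   x, y of such a ring one has  xy = -(x . y) + [x, y]  with x . y symmetric (hence central)
   and [x, y] skew, so the skew elements behave like vectors in R^3 with dot and cross
   product.  Splitting xyz into its symmetric and skew parts and comparing with
   (xyz)* = -zyx shows that the triple product [x,y] . z is cyclic and, together with the
   Jacobi identity, gives the expansion  [[a,b],c] = (c.a) b - (b.c) a.  Expanding
   [[x,y],[z,w]] in two ways yields a four-term linear relation among x, y, z, w, which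
   dotted with u is (i); applied with [u,v] in place of w and combined with the
   Binet-Cauchy identity it is the cofactor expansion of (ii). *)

section \<open>The involution on the group algebra\<close>

lemma gstar_add: "gstar (a + b) = gstar a + gstar b"
  by transfer auto

lemma gstar_zero [simp]: "gstar 0 = 0"
  by transfer auto

lemma gstar_diff: "gstar (a - b) = gstar a - gstar (b :: ('g::group_add, 'k::ab_group_add) group_alg)"
  by transfer auto

lemma gstar_single: "gstar (Poly_Mapping.single g c) = Poly_Mapping.single (- g) c"
  by transfer (auto simp: when_def fun_eq_iff)

lemma gstar_gstar [simp]: "gstar (gstar a) = a"
  by transfer auto

text \<open>Every finitely supported function is a finite sum of point masses; this is the
  induction principle behind extending identities from group elements to \<kappa>G.\<close>
lemma poly_mapping_single_induct:
  assumes "P 0" and "\<And>g c. P (Poly_Mapping.single g c)"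
    and "\<And>f h. P f \<Longrightarrow> P h \<Longrightarrow> P (f + h)"
  shows "P (f :: 'a \<Rightarrow>\<^sub>0 'b::monoid_add)"
proof (induct f rule: Poly_Mapping.update_induct)
  case const
  then show ?case using assms by simp
next
  case (update f a b)
  have "Poly_Mapping.update a b f = f + Poly_Mapping.single a b"
    using update(1)
    by (intro poly_mapping_eqI) (auto simp: lookup_update lookup_add lookup_single when_def in_keys_iff)
  then show ?case using assms update by simp
qed

text \<open>* reverses products: on group elements this is (gh)^{-1} = h^{-1} g^{-1}.\<close>
lemma gstar_mult:
  fixes a b :: "('g::group_add, 'k::comm_ring) group_alg"
  shows "gstar (a * b) = gstar b * gstar a"
proof (induct a rule: poly_mapping_single_induct)
  case (2 g c)
  show ?case
    by (induct b rule: poly_mapping_single_induct)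
       (simp_all add: mult_single gstar_single minus_add mult.commute distrib_left distrib_right gstar_add)
qed (simp_all add: distrib_left distrib_right gstar_add)

lemma gstar_half [simp]: "gstar half = half"
  by (simp add: half_def gstar_single)

lemma half_add_half: "half + half = (1 :: ('g::group_add, 'k::field_char_0) group_alg)"
  by (simp add: half_def flip: single_add)

section \<open>The ideal and the quotient ring A_G\<close>

lemma ideal_uminus: "y \<in> sym_comm_ideal \<Longrightarrow> - y \<in> sym_comm_ideal"
  using sym_comm_ideal.lmult[of y "- 1"] by simp

lemma ideal_diff: "x \<in> sym_comm_ideal \<Longrightarrow> y \<in> sym_comm_ideal \<Longrightarrow> x - y \<in> sym_comm_ideal"
  using sym_comm_ideal.add[OF _ ideal_uminus, of x y] by simp

text \<open>The ideal is *-stable, since (ab - ba)* = -(a* b - b a*) for b = b*; hence * descends to A_G.\<close>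
lemma ideal_gstar:
  "y \<in> sym_comm_ideal \<Longrightarrow> gstar y \<in> (sym_comm_ideal :: ('g::group_add, 'k::field) group_alg set)"
proof (induct rule: sym_comm_ideal.induct)
  case (gen b a)
  have "gstar (a * b - b * a) = - (gstar a * b - b * gstar a)"
    using gen by (simp add: gstar_diff gstar_mult)
  then show ?case using ideal_uminus sym_comm_ideal.gen[OF gen] by metis
qed (simp_all add: gstar_add gstar_mult sym_comm_ideal.intros)

lemma AG_refl: "AG_eq a a"
  by (simp add: AG_eq_def sym_comm_ideal.zero)

lemma AG_eq_uminus: "AG_eq a b \<Longrightarrow> AG_eq (- a) (- b)"
proof (unfold AG_eq_def)
  assume "a - b \<in> sym_comm_ideal"
  then have "- (a - b) \<in> sym_comm_ideal" by (rule ideal_uminus)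
  then show "- a - - b \<in> sym_comm_ideal" by simp
qed

lemma AG_eq_add: "AG_eq a b \<Longrightarrow> AG_eq c d \<Longrightarrow> AG_eq (a + c) (b + d)"
proof (unfold AG_eq_def)
  assume "a - b \<in> sym_comm_ideal" "c - d \<in> sym_comm_ideal"
  then have "(a - b) + (c - d) \<in> sym_comm_ideal" by (rule sym_comm_ideal.add)
  then show "a + c - (b + d) \<in> sym_comm_ideal" by (simp add: algebra_simps)
qed

lemma AG_eq_mult: "AG_eq a b \<Longrightarrow> AG_eq c d \<Longrightarrow> AG_eq (a * c) (b * d)"
proof (unfold AG_eq_def)
  assume "a - b \<in> sym_comm_ideal" "c - d \<in> sym_comm_ideal"
  then have "(a - b) * c + b * (c - d) \<in> sym_comm_ideal"
    by (intro sym_comm_ideal.add sym_comm_ideal.lmult sym_comm_ideal.rmult)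
  then show "a * c - b * d \<in> sym_comm_ideal"
    by (simp add: algebra_simps)
qed

lemma AG_sym: "AG_eq a b \<Longrightarrow> AG_eq b a"
  using AG_eq_uminus[of a b] by (simp add: AG_eq_def)

lemma AG_trans: "AG_eq a b \<Longrightarrow> AG_eq b c \<Longrightarrow> AG_eq a c"
  using AG_eq_add[of a b b c] by (simp add: AG_eq_def)

lemma AG_equivp: "equivp AG_eq"
  by (intro equivpI reflpI sympI transpI) (auto intro: AG_refl AG_sym AG_trans)

quotient_type (overloaded) ('g, 'k) ag = "('g::group_add, 'k::field) group_alg" / AG_eq
  by (rule AG_equivp)

instantiation ag :: (group_add, field) ring
begin

lift_definition zero_ag :: "('a, 'b) ag" is 0 .

lift_definition plus_ag :: "('a, 'b) ag \<Rightarrow> ('a, 'b) ag \<Rightarrow> ('a, 'b) ag" is "(+)"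
  by (rule AG_eq_add)

lift_definition uminus_ag :: "('a, 'b) ag \<Rightarrow> ('a, 'b) ag" is uminus
  by (rule AG_eq_uminus)

lift_definition minus_ag :: "('a, 'b) ag \<Rightarrow> ('a, 'b) ag \<Rightarrow> ('a, 'b) ag" is "(-)"
  unfolding diff_conv_add_uminus by (intro AG_eq_add AG_eq_uminus)

lift_definition times_ag :: "('a, 'b) ag \<Rightarrow> ('a, 'b) ag \<Rightarrow> ('a, 'b) ag" is "(*)"
  by (rule AG_eq_mult)

instance
  by standard (transfer; simp add: AG_refl algebra_simps)+

end

instantiation ag :: (group_add, field) monoid_mult
begin

lift_definition one_ag :: "('a, 'b) ag" is 1 .

instance
  by standard (transfer; simp add: AG_refl)+

end

lift_definition ag_star :: "('g::group_add, 'k::field) ag \<Rightarrow> ('g, 'k) ag" is gstar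
  by (metis AG_eq_def ideal_gstar gstar_diff)

lift_definition ag_half :: "('g::group_add, 'k::field) ag" is half .

text \<open>The defining property of A_G: *-symmetric elements are central.  Indeed
  2(ab - ba) = [a, b + b*] + [a, b - b*], where the first commutator is a generator of the
  ideal and the second lies in the ideal because b - b* does.\<close>
lemma ag_star_central:
  fixes a b :: "('g::group_add, 'k::field_char_0) ag"
  assumes "ag_star b = b"
  shows "a * b = b * a"
  using assms
proof transfer
  fix a b :: "('g, 'k) group_alg"
  assume "AG_eq (gstar b) b"
  then have sym_diff: "b - gstar b \<in> sym_comm_ideal"
    by (metis AG_sym AG_eq_def)
  have gen: "a * (b + gstar b) - (b + gstar b) * a \<in> sym_comm_ideal"
    by (rule sym_comm_ideal.gen) (simp add: gstar_add add.commute)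
  have "a * (b - gstar b) - (b - gstar b) * a \<in> sym_comm_ideal"
    by (rule ideal_diff[OF sym_comm_ideal.lmult[OF sym_diff] sym_comm_ideal.rmult[OF sym_diff]])
  then have "half * ((a * (b + gstar b) - (b + gstar b) * a)
      + (a * (b - gstar b) - (b - gstar b) * a)) \<in> sym_comm_ideal"
    by (rule sym_comm_ideal.lmult[OF sym_comm_ideal.add[OF gen]])
  moreover have "half * ((a * (b + gstar b) - (b + gstar b) * a)
      + (a * (b - gstar b) - (b - gstar b) * a)) = (half + half) * (a * b - b * a)"
    by (simp add: algebra_simps)
  ultimately show "AG_eq (a * b) (b * a)"
    by (simp add: AG_eq_def half_add_half)
qed

lemma ag_star_mult: "ag_star (a * b) = ag_star b * ag_star a"
  by transfer (simp add: gstar_mult AG_refl)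

lemma ag_star_add: "ag_star (a + b) = ag_star a + ag_star b"
  by transfer (simp add: gstar_add AG_refl)

lemma ag_star_ag_star: "ag_star (ag_star a) = a"
  by transfer (simp add: AG_refl)

lemma ag_star_half: "ag_star ag_half = ag_half"
  by transfer (simp add: AG_refl)

lemma ag_half_double: "ag_half + ag_half = (1 :: ('g::group_add, 'k::field_char_0) ag)"
  by transfer (simp add: half_add_half AG_refl)

section \<open>Vector algebra in a ring with a central involution\<close>

lemma det3_last_column:
  fixes a11 a12 a13 a21 a22 a23 a31 a32 a33 :: "'a::ring"
  assumes "\<And>t. a13 * t = t * a13" and "\<And>t. a23 * t = t * a23" and "\<And>t. a33 * t = t * a33"
  shows "det3 a11 a12 a13 a21 a22 a23 a31 a32 a33 =
     (a21 * a32 - a22 * a31) * a13 - (a11 * a32 - a12 * a31) * a23 + (a11 * a22 - a12 * a21) * a33"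
proof -
  have "a21 * (a32 * a13) = a13 * (a21 * a32)" "a22 * (a31 * a13) = a13 * (a22 * a31)"
    using assms(1) by (metis mult.assoc)+
  moreover have "a11 * (a32 * a23) = a11 * (a23 * a32)" "a12 * (a31 * a23) = a12 * (a23 * a31)"
    using assms(2) by metis+
  ultimately show ?thesis
    using assms(3) by (simp add: det3_def algebra_simps)
qed

locale central_involution_ring =
  fixes star :: "'a::{ring, monoid_mult} \<Rightarrow> 'a" and h :: 'a
  assumes star_mult: "star (a * b) = star b * star a"
    and star_add: "star (a + b) = star a + star b"
    and star_star [simp]: "star (star a) = a"
    and symmetric_central: "star b = b \<Longrightarrow> a * b = b * a"
    and star_h: "star h = h"
    and h_double: "h + h = 1"
begin

lemma star_zero: "star 0 = 0"
  using star_add[of 0 0] by simp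

lemma star_uminus: "star (- a) = - star a"
  using star_add[of "- a" a] by (simp add: star_zero eq_neg_iff_add_eq_0)

lemma star_diff: "star (a - b) = star a - star b"
  using star_add[of a "- b"] by (simp add: star_uminus)

lemma h_times_double: "h * (a + a) = a"
  by (metis distrib_left distrib_right h_double mult_1)

lemma h_central: "a * h = h * a"
  by (rule symmetric_central[OF star_h])

definition skew :: "'a \<Rightarrow> bool" where
  "skew x \<longleftrightarrow> star x = - x"

definition dot :: "'a \<Rightarrow> 'a \<Rightarrow> 'a" where
  "dot x y = - (h * (x * y + y * x))"

definition bracket :: "'a \<Rightarrow> 'a \<Rightarrow> 'a" where
  "bracket x y = h * (x * y - y * x)"

definition triple :: "'a \<Rightarrow> 'a \<Rightarrow> 'a \<Rightarrow> 'a" where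
  "triple x y z = dot (bracket x y) z"

definition sympart :: "'a \<Rightarrow> 'a" where
  "sympart a = h * (a + star a)"

definition skewpart :: "'a \<Rightarrow> 'a" where
  "skewpart a = h * (a - star a)"

lemma parts_of_sum:
  assumes "star s = s" and "star k = - k"
  shows "sympart (s + k) = s" and "skewpart (s + k) = k"
proof -
  have "sympart (s + k) = h * (s + s)" by (simp add: sympart_def star_add assms)
  then show "sympart (s + k) = s" by (simp add: h_times_double)
  have "skewpart (s + k) = h * (k + k)" by (simp add: skewpart_def star_add assms)
  then show "skewpart (s + k) = k" by (simp add: h_times_double)
qed

lemma parts_neg_star:
  "sympart (- star a) = - sympart a" "skewpart (- star a) = skewpart a"
  by (simp_all add: sympart_def skewpart_def star_uminus algebra_simps)

lemma dot_symmetric: "skew x \<Longrightarrow> skew y \<Longrightarrow> star (dot x y) = dot x y"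
  unfolding dot_def skew_def
  by (simp add: star_uminus star_add star_mult star_h symmetric_central[OF star_h] add.commute)

lemma dot_central: "skew x \<Longrightarrow> skew y \<Longrightarrow> a * dot x y = dot x y * a"
  by (rule symmetric_central[OF dot_symmetric])

lemma skew_bracket:
  assumes "skew x" "skew y"
  shows "skew (bracket x y)"
proof -
  have "star (bracket x y) = (y * x - x * y) * h"
    using assms by (simp add: skew_def bracket_def star_mult star_diff star_h)
  also have "\<dots> = h * (y * x - x * y)"
    by (rule h_central)
  also have "\<dots> = - bracket x y"
    by (simp add: bracket_def algebra_simps)
  finally show ?thesis by (simp add: skew_def)
qed

lemma skew_symmetric_mult: "star c = c \<Longrightarrow> skew x \<Longrightarrow> skew (c * x)"
  by (simp add: skew_def star_mult symmetric_central)

lemma skew_diff: "skew x \<Longrightarrow> skew y \<Longrightarrow> skew (x - y)"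
  by (simp add: skew_def star_diff)

lemma triple_symmetric: "skew x \<Longrightarrow> skew y \<Longrightarrow> skew z \<Longrightarrow> star (triple x y z) = triple x y z"
  by (simp add: triple_def dot_symmetric skew_bracket)

lemma mult_split: "x * y = - dot x y + bracket x y"
proof -
  have "- dot x y + bracket x y = h * (x * y + x * y)"
    by (simp add: dot_def bracket_def algebra_simps)
  then show ?thesis by (simp add: h_times_double)
qed

lemma dot_comm: "dot x y = dot y x"
  by (simp add: dot_def add.commute)

lemma bracket_anti: "bracket x y = - bracket y x"
  by (simp add: bracket_def algebra_simps)

lemma dot_uminus: "dot (- x) y = - dot x y"
  by (simp add: dot_def algebra_simps)

lemma dot_add: "dot (x + x') y = dot x y + dot x' y"
  by (simp add: dot_def algebra_simps)

lemma dot_diff: "dot (x - x') y = dot x y - dot x' y"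
  by (simp add: dot_def algebra_simps)

lemma dot_zero: "dot 0 y = 0"
  by (simp add: dot_def)

lemma dot_symmetric_mult:
  assumes "star c = c"
  shows "dot (c * x) y = c * dot x y"
proof -
  have "y * (c * x) = c * (y * x)"
    using symmetric_central[OF assms, of y] by (simp flip: mult.assoc)
  then have "dot (c * x) y = - (h * (c * (x * y + y * x)))"
    by (simp add: dot_def mult.assoc distrib_left)
  also have "h * (c * (x * y + y * x)) = c * (h * (x * y + y * x))"
    using h_central[of c] by (simp flip: mult.assoc)
  finally show ?thesis
    by (simp add: dot_def)
qed

lemma jacobi: "bracket (bracket x y) z + bracket (bracket y z) x + bracket (bracket z x) y = 0"
proof -
  have scaled: "bracket (h * t) c = h * (h * (t * c - c * t))" for t c
  proof -
    have "c * (h * t) = h * (c * t)"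
      using h_central[of c] by (simp flip: mult.assoc)
    then show ?thesis
      by (simp add: bracket_def mult.assoc right_diff_distrib)
  qed
  have double_bracket:
    "bracket (bracket a b) c = h * (h * ((a * b - b * a) * c - c * (a * b - b * a)))" for a b c
    unfolding bracket_def[of a b] by (rule scaled)
  show ?thesis
    unfolding double_bracket by (simp add: algebra_simps)
qed

lemma triple_product_parts:
  assumes "skew x" "skew y" "skew z"
  shows "sympart (x * y * z) = - triple x y z"
    and "skewpart (x * y * z) = bracket (bracket x y) z - dot x y * z"
proof -
  have split: "x * y * z = - triple x y z + (bracket (bracket x y) z - dot x y * z)"
    by (simp add: triple_def mult_split[of x y] mult_split[of "bracket x y" z] algebra_simps)
  have "star (- triple x y z) = - triple x y z"
    using assms by (simp add: star_uminus triple_symmetric)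
  moreover have "star (bracket (bracket x y) z - dot x y * z) = - (bracket (bracket x y) z - dot x y * z)"
    using assms skew_diff[OF skew_bracket[OF skew_bracket] skew_symmetric_mult[OF dot_symmetric]]
    by (simp add: skew_def)
  ultimately show "sympart (x * y * z) = - triple x y z"
    and "skewpart (x * y * z) = bracket (bracket x y) z - dot x y * z"
    unfolding split by (rule parts_of_sum)+
qed

lemma star_triple_product: "skew x \<Longrightarrow> skew y \<Longrightarrow> skew z \<Longrightarrow> star (x * y * z) = - (z * y * x)"
  by (simp add: skew_def star_mult mult.assoc)

text \<open>Comparing the parts of xyz and zyx = -(xyz)*.\<close>
lemma triple_cyclic:
  assumes "skew x" "skew y" "skew z"
  shows "triple x y z = triple y z x"
proof -
  have "- triple z y x = - sympart (x * y * z)"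
    using assms parts_neg_star(1)[of "x * y * z"]
    by (simp add: star_triple_product triple_product_parts)
  then show ?thesis
    using assms by (simp add: triple_product_parts triple_def bracket_anti[of z y] dot_uminus)
qed

lemma reversed_skew_part:
  assumes "skew x" "skew y" "skew z"
  shows "bracket (bracket z y) x - dot z y * x = bracket (bracket x y) z - dot x y * z"
  using assms parts_neg_star(2)[of "x * y * z"]
  by (simp add: star_triple_product triple_product_parts)

lemma bracket_bracket_expand:
  assumes "skew a" "skew b" "skew c"
  shows "bracket (bracket a b) c = dot c a * b - dot b c * a"
proof -
  have "bracket (bracket c a) b = - bracket (bracket a c) b"
    by (simp add: bracket_anti[of c a] bracket_def algebra_simps)
  then have "bracket (bracket a b) c = bracket (bracket a c) b - bracket (bracket b c) a"
    using jacobi[of a b c] by (simp add: eq_diff_eq)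
  moreover have "bracket (bracket a c) b = bracket (bracket b c) a - dot b c * a + dot a c * b"
    using reversed_skew_part[OF assms(2,3,1)] by (simp add: diff_eq_eq)
  ultimately show ?thesis
    by (simp add: dot_comm[of a c])
qed

lemma bracket_of_brackets:
  assumes "skew x" "skew y" "skew z" "skew w"
  shows "bracket (bracket x y) (bracket z w) = triple x z w * y - triple y z w * x"
proof -
  have "triple x z w = dot (bracket z w) x" "triple y z w = dot y (bracket z w)"
    using assms triple_cyclic[of x z w] triple_cyclic[of z w x] triple_cyclic[of y z w]
    by (simp_all add: triple_def dot_comm)
  then show ?thesis
    using assms by (simp add: bracket_bracket_expand skew_bracket)
qed

lemma four_term_relation:
  assumes "skew x" "skew y" "skew z" "skew w"
  shows "triple y z w * x - triple x z w * y + triple x y w * z - triple x y z * w = 0"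
proof -
  have "triple x z w * y - triple y z w * x = - (triple z x y * w - triple w x y * z)"
    using assms bracket_anti[of "bracket x y" "bracket z w"]
    by (simp add: bracket_of_brackets)
  moreover have "triple z x y = triple x y z" "triple w x y = triple x y w"
    using assms triple_cyclic by metis+
  ultimately show ?thesis
    by (simp add: algebra_simps)
qed

lemma identity_i:
  assumes "skew x" "skew y" "skew z" "skew w"
  shows "triple y z w * dot x u - triple x z w * dot y u + triple x y w * dot z u
      - triple x y z * dot w u = 0"
proof -
  have "triple y z w * dot x u - triple x z w * dot y u + triple x y w * dot z u
      - triple x y z * dot w u
      = dot (triple y z w * x - triple x z w * y + triple x y w * z - triple x y z * w) u"
    using assms by (simp add: dot_add dot_diff dot_symmetric_mult triple_symmetric)
  then show ?thesis
    using assms by (simp add: four_term_relation dot_zero)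
qed

lemma binet_cauchy:
  assumes "skew a" "skew b" "skew u" "skew v"
  shows "triple a b (bracket u v) = dot a u * dot b v - dot a v * dot b u"
proof -
  have "triple a b (bracket u v) = dot (bracket b (bracket u v)) a"
    using assms triple_cyclic[of a b "bracket u v"] by (simp add: triple_def skew_bracket)
  also have "bracket b (bracket u v) = dot v b * u - dot b u * v"
    using assms bracket_anti[of b "bracket u v"] by (simp add: bracket_bracket_expand)
  finally have "triple a b (bracket u v) = dot v b * dot u a - dot b u * dot v a"
    using assms by (simp add: dot_diff dot_symmetric_mult dot_symmetric)
  moreover have "dot v b * dot u a = dot a u * dot b v" "dot b u * dot v a = dot a v * dot b u"
    using assms dot_central dot_comm by metis+
  ultimately show ?thesis
    by simp
qed

lemma identity_ii:
  assumes "skew x" "skew y" "skew z" "skew u" "skew v" "skew w"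
  shows "triple x y z * triple u v w =
    det3 (dot x u) (dot x v) (dot x w) (dot y u) (dot y v) (dot y w) (dot z u) (dot z v) (dot z w)"
proof -
  have "triple y z (bracket u v) * dot x w - triple x z (bracket u v) * dot y w
      + triple x y (bracket u v) * dot z w - triple x y z * dot (bracket u v) w = 0"
    using assms by (simp add: identity_i skew_bracket)
  then have "triple x y z * triple u v w = triple y z (bracket u v) * dot x w
      - triple x z (bracket u v) * dot y w + triple x y (bracket u v) * dot z w"
    by (simp add: triple_def algebra_simps)
  also have "\<dots> = (dot y u * dot z v - dot y v * dot z u) * dot x w
      - (dot x u * dot z v - dot x v * dot z u) * dot y w
      + (dot x u * dot y v - dot x v * dot y u) * dot z w"
    using assms by (simp only: binet_cauchy)
  also have "\<dots> = det3 (dot x u) (dot x v) (dot x w) (dot y u) (dot y v) (dot y w)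
      (dot z u) (dot z v) (dot z w)"
    by (intro det3_last_column[symmetric] dot_central[symmetric] assms)
  finally show ?thesis .
qed

end

section \<open>Back to the group algebra\<close>

interpretation A_G: central_involution_ring "ag_star :: ('g::group_add, 'k::field_char_0) ag \<Rightarrow> _" ag_half
  by standard
    (fact ag_star_mult ag_star_add ag_star_ag_star ag_star_central ag_star_half ag_half_double)+

lemma abs_ag_add: "abs_ag (a + b) = abs_ag a + abs_ag b"
  by (simp add: plus_ag.abs_eq)

lemma abs_ag_diff: "abs_ag (a - b) = abs_ag a - abs_ag b"
  by (simp add: minus_ag.abs_eq)

lemma abs_ag_mult: "abs_ag (a * b) = abs_ag a * abs_ag b"
  by (simp add: times_ag.abs_eq)

lemma abs_ag_gdot:
  "abs_ag (gdot a b) = A_G.dot (abs_ag a) (abs_ag (b :: ('g::group_add, 'k::field_char_0) group_alg))"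
  unfolding gdot_def A_G.dot_def unfolding ag_half_def
  by (simp add: plus_ag.abs_eq times_ag.abs_eq uminus_ag.abs_eq)

lemma abs_ag_gbr:
  "abs_ag (gbr a b) = A_G.bracket (abs_ag a) (abs_ag (b :: ('g::group_add, 'k::field_char_0) group_alg))"
  unfolding gbr_def A_G.bracket_def unfolding ag_half_def
  by (simp add: minus_ag.abs_eq times_ag.abs_eq)

lemma abs_ag_det3:
  "abs_ag (det3 a11 a12 a13 a21 a22 a23 a31 a32 a33) = det3 (abs_ag a11) (abs_ag a12) (abs_ag a13)
     (abs_ag a21) (abs_ag a22) (abs_ag a23) (abs_ag a31) (abs_ag a32) (abs_ag a33)"
  by (simp add: det3_def abs_ag_add abs_ag_diff abs_ag_mult)

lemma skew_abs_ag: "in_Lambda (x :: ('g::group_add, 'k::field_char_0) group_alg) \<Longrightarrow> A_G.skew (abs_ag x)"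
  by (simp add: in_Lambda_def A_G.skew_def ag_star.abs_eq uminus_ag.abs_eq ag.abs_eq_iff)

theorem mainTheorem8:
  fixes x y z u v w :: "('g::group_add, 'k::field_char_0) group_alg"
  assumes "in_Lambda x" and "in_Lambda y" and "in_Lambda z"
    and "in_Lambda u" and "in_Lambda v" and "in_Lambda w"
  shows "AG_eq (gdot (gbr y z) w * gdot x u - gdot (gbr x z) w * gdot y u
              + gdot (gbr x y) w * gdot z u - gdot (gbr x y) z * gdot w u) 0
     \<and> AG_eq (gdot (gbr x y) z * gdot (gbr u v) w)
           (det3 (gdot x u) (gdot x v) (gdot x w)
                 (gdot y u) (gdot y v) (gdot y w)
                 (gdot z u) (gdot z v) (gdot z w))"
proof -
  note skew = assms[THEN skew_abs_ag]
  show ?thesis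
    unfolding ag.abs_eq_iff[symmetric] zero_ag_def[symmetric]
      abs_ag_add abs_ag_diff abs_ag_mult abs_ag_det3 abs_ag_gdot abs_ag_gbr
    using A_G.identity_i[OF skew(1-3,6)] A_G.identity_ii[OF skew]
    unfolding A_G.triple_def by blast
qed

end
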